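(* Let $R$ be a commutative ring with identity; for $a\in R$ let $\mathfrak{a}=aR$. The following statements are equivalent: (1) $R$ is reduced (has no nonzero nilpotent elements); (2) $a\Gamma_{a}(R)=0$ for all $a\in R$; (3) $(0:_R a)=(0:_R a^{k})$ for all $a\in R$ and all $k\in\mathbb{Z}^{+}$; (4) $\varinjlim_{k}\operatorname{Hom}_R(R/\mathfrak{a}^{k},R)\cong \operatorname{Hom}_R(R/\mathfrak{a},R)$ for all $a\in R$; (5) $\Gamma_{a}(R)\cong \operatorname{Hom}_R(R/\mathfrak{a},R)$ for all $a\in R$; (6) for all $a\in R$, $0\to \Gamma_{a}(R)\to R\to aR\to 0$ is a short exact sequence, where the first map is the inclusion and the second is $r\mapsto ar$.
   Context: For $a\in R$: $\Gamma_{a}(R)=\{r\in R \mid a^{k}r=0 \text{ for some } k\in\mathbb{Z}^{+}\}$, $a\Gamma_{a}(R)=\{ar \mid r\in \Gamma_a(R)\}$, and $(0:_R a^{k})=\{r\in R\mid a^{k}r=0\}$. *)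

theory Defs
  imports Main
begin

definition reduced_ring :: "'a::comm_ring_1 itself \<Rightarrow> bool" where
  "reduced_ring _ \<longleftrightarrow> (\<forall>x::'a. \<forall>n::nat. x ^ n = 0 \<longrightarrow> x = 0)"

definition Gamma :: "'a::comm_ring_1 \<Rightarrow> 'a set" where
  "Gamma a = {r. \<exists>k::nat. k \<ge> 1 \<and> a ^ k * r = 0}"

definition annih :: "'a::comm_ring_1 \<Rightarrow> nat \<Rightarrow> 'a set" where
  "annih a k = {r. a ^ k * r = 0}"

(* principal ideal (a^k)R = \<frak>a^k and its cosets: the quotient module R/\<frak>a^k *)
definition qclass :: "'a::comm_ring_1 \<Rightarrow> nat \<Rightarrow> 'a \<Rightarrow> 'a set" where
  "qclass a k x = {x + a ^ k * s | s. True}"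

definition quot :: "'a::comm_ring_1 \<Rightarrow> nat \<Rightarrow> 'a set set" where
  "quot a k = range (qclass a k)"

(* Hom_R(R/\<frak>a^k, R): R-linear maps on the quotient module R/\<frak>a^k
   (with [x]+[y]=[x+y], r[x]=[rx]), made extensional (value 0 off the carrier) *)
definition HomQ :: "'a::comm_ring_1 \<Rightarrow> nat \<Rightarrow> ('a set \<Rightarrow> 'a) set" where
  "HomQ a k = {\<phi>. (\<forall>x y. \<phi> (qclass a k (x + y)) = \<phi> (qclass a k x) + \<phi> (qclass a k y))
                \<and> (\<forall>r x. \<phi> (qclass a k (r * x)) = r * \<phi> (qclass a k x))
                \<and> (\<forall>C. C \<notin> quot a k \<longrightarrow> \<phi> C = 0)}"

definition hom_add :: "('a set \<Rightarrow> 'a::comm_ring_1) \<Rightarrow> ('a set \<Rightarrow> 'a) \<Rightarrow> ('a set \<Rightarrow> 'a)" where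
  "hom_add \<phi> \<psi> = (\<lambda>C. \<phi> C + \<psi> C)"

definition hom_smul :: "'a::comm_ring_1 \<Rightarrow> ('a set \<Rightarrow> 'a) \<Rightarrow> ('a set \<Rightarrow> 'a)" where
  "hom_smul r \<phi> = (\<lambda>C. r * \<phi> C)"

(* transition map Hom(R/\<frak>a^k,R) \<rightarrow> Hom(R/\<frak>a^m,R) (k \<le> m), induced by the
   canonical projection R/\<frak>a^m \<rightarrow> R/\<frak>a^k, [x]_m \<mapsto> [x]_k *)
definition trans_map :: "'a::comm_ring_1 \<Rightarrow> nat \<Rightarrow> nat \<Rightarrow> ('a set \<Rightarrow> 'a) \<Rightarrow> ('a set \<Rightarrow> 'a)" where
  "trans_map a k m \<phi> = (\<lambda>C. if C \<in> quot a m
        then \<phi> (qclass a k (SOME x. C = qclass a m x)) else 0)"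

(* direct limit over k \<in> Z^+ of Hom(R/\<frak>a^k,R): equivalence classes of pairs (k,\<phi>) *)
definition dl_rel :: "'a::comm_ring_1 \<Rightarrow> ((nat \<times> ('a set \<Rightarrow> 'a)) \<times> (nat \<times> ('a set \<Rightarrow> 'a))) set" where
  "dl_rel a = {((k,\<phi>),(l,\<psi>)). k \<ge> 1 \<and> l \<ge> 1 \<and> \<phi> \<in> HomQ a k \<and> \<psi> \<in> HomQ a l \<and>
       (\<exists>m. k \<le> m \<and> l \<le> m \<and> trans_map a k m \<phi> = trans_map a l m \<psi>)}"

definition dl_carrier :: "'a::comm_ring_1 \<Rightarrow> (nat \<times> ('a set \<Rightarrow> 'a)) set set" where
  "dl_carrier a = {dl_rel a `` {(k,\<phi>)} | k \<phi>. k \<ge> 1 \<and> \<phi> \<in> HomQ a k}"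

definition dl_add :: "'a::comm_ring_1 \<Rightarrow> (nat \<times> ('a set \<Rightarrow> 'a)) set \<Rightarrow> (nat \<times> ('a set \<Rightarrow> 'a)) set
                      \<Rightarrow> (nat \<times> ('a set \<Rightarrow> 'a)) set" where
  "dl_add a X Y = (let (k,\<phi>) = (SOME p. p \<in> X); (l,\<psi>) = (SOME q. q \<in> Y); m = max k l
      in dl_rel a `` {(m, hom_add (trans_map a k m \<phi>) (trans_map a l m \<psi>))})"

definition dl_smul :: "'a::comm_ring_1 \<Rightarrow> 'a \<Rightarrow> (nat \<times> ('a set \<Rightarrow> 'a)) set \<Rightarrow> (nat \<times> ('a set \<Rightarrow> 'a)) set" where
  "dl_smul a r X = (let (k,\<phi>) = (SOME p. p \<in> X) in dl_rel a `` {(k, hom_smul r \<phi>)})"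

definition mod_iso :: "'m set \<Rightarrow> ('m \<Rightarrow> 'm \<Rightarrow> 'm) \<Rightarrow> ('a \<Rightarrow> 'm \<Rightarrow> 'm)
                    \<Rightarrow> 'n set \<Rightarrow> ('n \<Rightarrow> 'n \<Rightarrow> 'n) \<Rightarrow> ('a \<Rightarrow> 'n \<Rightarrow> 'n) \<Rightarrow> bool" where
  "mod_iso M addM smulM N addN smulN \<longleftrightarrow> (\<exists>f. bij_betw f M N
      \<and> (\<forall>x\<in>M. \<forall>y\<in>M. f (addM x y) = addN (f x) (f y))
      \<and> (\<forall>r. \<forall>x\<in>M. f (smulM r x) = smulN r (f x)))"

definition ses_Gamma :: "'a::comm_ring_1 \<Rightarrow> bool" where
  "ses_Gamma a \<longleftrightarrow> inj_on id (Gamma a)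
      \<and> id ` Gamma a = {r. a * r = 0}
      \<and> (\<lambda>r. a * r) ` UNIV = {a * s | s. True}"

end

theory Submission
  imports Defs
begin

text \<open>Evaluation at the class of \<open>1\<close> identifies \<open>Hom(R/a\<^sup>kR, R)\<close> with the annihilator
  \<open>(0 : a\<^sup>k)\<close>, compatibly with the transition maps, so the direct limit is \<open>Gamma a\<close> itself.
  Each condition therefore says that \<open>Gamma a\<close> collapses to \<open>(0 : a)\<close>. In a reduced ring
  \<open>a\<^sup>k r = 0\<close> gives \<open>(a r)\<^sup>k = 0\<close>, hence \<open>a r = 0\<close>; conversely, for nilpotent \<open>x\<close> we have
  \<open>1 \<in> Gamma x\<close>, and each condition then forces \<open>x = 0\<close>.\<close>

section \<open>Annihilators of powers\<close>

lemma mem_Gamma_iff: "e \<in> Gamma a \<longleftrightarrow> (\<exists>k\<ge>1. e \<in> annih a k)"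
  unfolding Gamma_def annih_def by auto

lemma annih_mono:
  assumes "k \<le> m" shows "annih a k \<subseteq> annih a m"
proof
  fix e assume "e \<in> annih a k"
  obtain d where "m = k + d" using assms le_Suc_ex by blast
  then have "a ^ m * e = a ^ d * (a ^ k * e)" by (simp add: power_add algebra_simps)
  with \<open>e \<in> annih a k\<close> show "e \<in> annih a m" unfolding annih_def by simp
qed

lemma Gamma_add:
  assumes "e1 \<in> Gamma a" "e2 \<in> Gamma a" shows "e1 + e2 \<in> Gamma a"
proof -
  obtain k l where "k \<ge> 1" "e1 \<in> annih a k" "l \<ge> 1" "e2 \<in> annih a l"
    using assms mem_Gamma_iff by metis
  then have "e1 \<in> annih a (max k l)" "e2 \<in> annih a (max k l)"
    using annih_mono[of k "max k l" a] annih_mono[of l "max k l" a] by auto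
  then have "e1 + e2 \<in> annih a (max k l)" unfolding annih_def by (simp add: distrib_left)
  then show ?thesis using \<open>k \<ge> 1\<close> mem_Gamma_iff by (metis max.coboundedI1)
qed

lemma annih_mult: "e \<in> annih a k \<Longrightarrow> r * e \<in> annih a k"
  unfolding annih_def by (simp add: mult.left_commute)

lemma Gamma_mult: "e \<in> Gamma a \<Longrightarrow> r * e \<in> Gamma a"
  using annih_mult mem_Gamma_iff by metis

section \<open>Homomorphisms out of R/a^kR\<close>

lemma qclass_eq_iff: "qclass a k x = qclass a k y \<longleftrightarrow> (\<exists>s. x = y + a ^ k * s)"
proof
  assume "qclass a k x = qclass a k y"
  moreover have "x \<in> qclass a k x" unfolding qclass_def by (rule CollectI, rule exI[of _ 0]) simp
  ultimately show "\<exists>s. x = y + a ^ k * s" unfolding qclass_def by auto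
next
  assume "\<exists>s. x = y + a ^ k * s"
  then obtain s where "x = y + a ^ k * s" by blast
  then have "x + a ^ k * t = y + a ^ k * (s + t)" "y + a ^ k * t = x + a ^ k * (t - s)" for t
    by (simp_all add: algebra_simps)
  then show "qclass a k x = qclass a k y" unfolding qclass_def by blast
qed

text \<open>The representative is chosen with \<open>SOME\<close>; the value is independent of that choice only
  when \<open>e \<in> annih a k\<close> (\<open>quot_mult_hom_qclass\<close>).\<close>

definition quot_mult_hom :: "'a::comm_ring_1 \<Rightarrow> nat \<Rightarrow> 'a \<Rightarrow> 'a set \<Rightarrow> 'a" where
  "quot_mult_hom a k e = (\<lambda>C. if C \<in> quot a k then (SOME x. C = qclass a k x) * e else 0)"

lemma quot_mult_hom_qclass:
  assumes "e \<in> annih a k" shows "quot_mult_hom a k e (qclass a k y) = y * e"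
proof -
  define x where "x = (SOME x. qclass a k y = qclass a k x)"
  have "qclass a k y = qclass a k x" unfolding x_def by (rule someI_ex) blast
  then obtain s where "y = x + a ^ k * s" using qclass_eq_iff by blast
  then have "y * e = x * e + s * (a ^ k * e)" by (simp add: algebra_simps)
  with assms have "y * e = x * e" unfolding annih_def by simp
  then show ?thesis unfolding quot_mult_hom_def x_def quot_def by simp
qed

lemma quot_mult_hom_in_HomQ:
  assumes "e \<in> annih a k" shows "quot_mult_hom a k e \<in> HomQ a k"
  unfolding HomQ_def
proof (intro CollectI conjI allI impI)
  show "quot_mult_hom a k e (qclass a k (x + y))
      = quot_mult_hom a k e (qclass a k x) + quot_mult_hom a k e (qclass a k y)" for x y
    by (simp add: quot_mult_hom_qclass[OF assms] distrib_right)
  show "quot_mult_hom a k e (qclass a k (r * x)) = r * quot_mult_hom a k e (qclass a k x)" for r x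
    by (simp add: quot_mult_hom_qclass[OF assms] mult.assoc)
  show "quot_mult_hom a k e C = 0" if "C \<notin> quot a k" for C
    using that by (simp add: quot_mult_hom_def)
qed

lemma hom_add_quot_mult_hom:
  "hom_add (quot_mult_hom a k e1) (quot_mult_hom a k e2) = quot_mult_hom a k (e1 + e2)"
  unfolding hom_add_def quot_mult_hom_def by (simp add: fun_eq_iff distrib_left)

lemma hom_smul_quot_mult_hom: "hom_smul r (quot_mult_hom a k e) = quot_mult_hom a k (r * e)"
  unfolding hom_smul_def quot_mult_hom_def by (simp add: fun_eq_iff mult.left_commute)

lemma HomQ_qclass:
  assumes "\<phi> \<in> HomQ a k" shows "\<phi> (qclass a k x) = x * \<phi> (qclass a k 1)"
proof -
  have "\<phi> (qclass a k (x * 1)) = x * \<phi> (qclass a k 1)" using assms unfolding HomQ_def by blast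
  then show ?thesis by simp
qed

lemma HomQ_annih: assumes "\<phi> \<in> HomQ a k" shows "\<phi> (qclass a k 1) \<in> annih a k"
proof -
  have "qclass a k (a ^ k) = qclass a k 0" unfolding qclass_eq_iff by (rule exI[of _ 1]) simp
  then show ?thesis using HomQ_qclass[OF assms, of "a ^ k"] HomQ_qclass[OF assms, of 0]
    unfolding annih_def by simp
qed

lemma HomQ_eq_quot_mult_hom:
  assumes "\<phi> \<in> HomQ a k" shows "\<phi> = quot_mult_hom a k (\<phi> (qclass a k 1))"
proof
  fix C
  show "\<phi> C = quot_mult_hom a k (\<phi> (qclass a k 1)) C"
  proof (cases "C \<in> quot a k")
    case True
    then obtain y where "C = qclass a k y" unfolding quot_def by auto
    then show ?thesis
      using HomQ_qclass[OF assms, of y] quot_mult_hom_qclass[OF HomQ_annih[OF assms], of y] by simp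
  next
    case False
    then show ?thesis using assms unfolding HomQ_def quot_mult_hom_def by auto
  qed
qed

lemma bij_betw_quot_mult_hom: "bij_betw (quot_mult_hom a k) (annih a k) (HomQ a k)"
proof (rule bij_betwI')
  show "quot_mult_hom a k e1 = quot_mult_hom a k e2 \<longleftrightarrow> e1 = e2"
    if "e1 \<in> annih a k" "e2 \<in> annih a k" for e1 e2
  proof
    assume "quot_mult_hom a k e1 = quot_mult_hom a k e2"
    then have "quot_mult_hom a k e1 (qclass a k 1) = quot_mult_hom a k e2 (qclass a k 1)" by simp
    then show "e1 = e2" using that by (simp add: quot_mult_hom_qclass)
  qed simp
  show "quot_mult_hom a k e \<in> HomQ a k" if "e \<in> annih a k" for e
    using that by (rule quot_mult_hom_in_HomQ)
  show "\<exists>e\<in>annih a k. \<phi> = quot_mult_hom a k e" if "\<phi> \<in> HomQ a k" for \<phi>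
    using HomQ_annih[OF that] HomQ_eq_quot_mult_hom[OF that] by (rule bexI[rotated])
qed

lemma annih_iso_HomQ: "mod_iso (annih a k) (+) (*) (HomQ a k) hom_add hom_smul"
  unfolding mod_iso_def
  using bij_betw_quot_mult_hom hom_add_quot_mult_hom hom_smul_quot_mult_hom by metis

lemma hom_smul_power_HomQ:
  assumes "\<phi> \<in> HomQ a k" shows "hom_smul (a ^ k) \<phi> = (\<lambda>_. 0)"
proof -
  define e where "e = \<phi> (qclass a k 1)"
  have "\<phi> = quot_mult_hom a k e" unfolding e_def by (rule HomQ_eq_quot_mult_hom[OF assms])
  then have "hom_smul (a ^ k) \<phi> = quot_mult_hom a k (a ^ k * e)"
    by (simp only: hom_smul_quot_mult_hom)
  also have "a ^ k * e = 0" using HomQ_annih[OF assms] unfolding e_def annih_def by simp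
  finally show ?thesis by (simp add: quot_mult_hom_def fun_eq_iff)
qed

section \<open>The direct limit\<close>

lemma trans_map_quot_mult_hom:
  assumes "e \<in> annih a k" "k \<le> m"
  shows "trans_map a k m (quot_mult_hom a k e) = quot_mult_hom a m e"
proof
  fix C
  have e: "e \<in> annih a m" using assms annih_mono by blast
  show "trans_map a k m (quot_mult_hom a k e) C = quot_mult_hom a m e C"
  proof (cases "C \<in> quot a m")
    case True
    define x where "x = (SOME x. C = qclass a m x)"
    have C: "C = qclass a m x" unfolding x_def by (rule someI_ex) (use True in \<open>auto simp: quot_def\<close>)
    have "trans_map a k m (quot_mult_hom a k e) C = quot_mult_hom a k e (qclass a k x)"
      using True unfolding trans_map_def x_def by simp
    also have "\<dots> = x * e" using quot_mult_hom_qclass[OF assms(1)] .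
    also have "\<dots> = quot_mult_hom a m e C" using quot_mult_hom_qclass[OF e] C by simp
    finally show ?thesis .
  next
    case False
    then show ?thesis unfolding trans_map_def quot_mult_hom_def by simp
  qed
qed

lemma trans_map_HomQ:
  assumes "\<phi> \<in> HomQ a k" "k \<le> m"
  shows "trans_map a k m \<phi> = quot_mult_hom a m (\<phi> (qclass a k 1))"
  using trans_map_quot_mult_hom[OF HomQ_annih[OF assms(1)] assms(2)]
  by (simp flip: HomQ_eq_quot_mult_hom[OF assms(1)])

lemma dl_rel_iff:
  "((k, \<phi>), (l, \<psi>)) \<in> dl_rel a \<longleftrightarrow> k \<ge> 1 \<and> l \<ge> 1 \<and> \<phi> \<in> HomQ a k \<and> \<psi> \<in> HomQ a l
     \<and> \<phi> (qclass a k 1) = \<psi> (qclass a l 1)"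
proof -
  have "trans_map a k m \<phi> = trans_map a l m \<psi> \<longleftrightarrow> \<phi> (qclass a k 1) = \<psi> (qclass a l 1)"
    if "\<phi> \<in> HomQ a k" "\<psi> \<in> HomQ a l" "k \<le> m" "l \<le> m" for m
  proof -
    have "\<phi> (qclass a k 1) \<in> annih a m" "\<psi> (qclass a l 1) \<in> annih a m"
      using that HomQ_annih annih_mono by blast+
    then show ?thesis
      using bij_betw_quot_mult_hom[of a m] trans_map_HomQ that
      unfolding bij_betw_def inj_on_def by metis
  qed
  then show ?thesis unfolding dl_rel_def
    by simp (blast intro: max.cobounded1 max.cobounded2)
qed

text \<open>By \<open>dl_rel_iff\<close>, two pairs are identified in the direct limit exactly when they take the
  same value at the class of \<open>1\<close>; so the classes are indexed by that value, an element of
  \<open>Gamma a\<close>.\<close>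

definition dl_class :: "'a::comm_ring_1 \<Rightarrow> 'a \<Rightarrow> (nat \<times> ('a set \<Rightarrow> 'a)) set" where
  "dl_class a e = {(k, \<phi>). k \<ge> 1 \<and> \<phi> \<in> HomQ a k \<and> \<phi> (qclass a k 1) = e}"

lemma dl_rel_Image:
  "k \<ge> 1 \<Longrightarrow> \<phi> \<in> HomQ a k \<Longrightarrow> dl_rel a `` {(k, \<phi>)} = dl_class a (\<phi> (qclass a k 1))"
  unfolding dl_class_def by (auto simp: dl_rel_iff)

lemma quot_mult_hom_in_dl_class:
  "k \<ge> 1 \<Longrightarrow> e \<in> annih a k \<Longrightarrow> (k, quot_mult_hom a k e) \<in> dl_class a e"
  unfolding dl_class_def by (simp add: quot_mult_hom_in_HomQ quot_mult_hom_qclass)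

lemma some_in_dl_class:
  assumes "e \<in> Gamma a"
  obtains k \<phi> where "(SOME p. p \<in> dl_class a e) = (k, \<phi>)"
    "k \<ge> 1" "\<phi> \<in> HomQ a k" "\<phi> (qclass a k 1) = e"
proof -
  obtain k where "k \<ge> 1" "e \<in> annih a k" using assms mem_Gamma_iff by blast
  then have "(SOME p. p \<in> dl_class a e) \<in> dl_class a e"
    using quot_mult_hom_in_dl_class by (metis someI)
  then show ?thesis using that unfolding dl_class_def by auto
qed

lemma dl_carrier_eq: "dl_carrier a = dl_class a ` Gamma a"
proof (intro set_eqI iffI)
  fix X assume "X \<in> dl_carrier a"
  then obtain k \<phi> where X: "X = dl_rel a `` {(k, \<phi>)}" and k: "k \<ge> 1" and \<phi>: "\<phi> \<in> HomQ a k"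
    unfolding dl_carrier_def by auto
  have "\<phi> (qclass a k 1) \<in> Gamma a" using HomQ_annih[OF \<phi>] k mem_Gamma_iff by blast
  moreover have "X = dl_class a (\<phi> (qclass a k 1))" using X dl_rel_Image[OF k \<phi>] by simp
  ultimately show "X \<in> dl_class a ` Gamma a" by blast
next
  fix X assume "X \<in> dl_class a ` Gamma a"
  then obtain e k where X: "X = dl_class a e" and k: "k \<ge> 1" and e: "e \<in> annih a k"
    using mem_Gamma_iff by blast
  have "X = dl_rel a `` {(k, quot_mult_hom a k e)}"
    using X dl_rel_Image[OF k quot_mult_hom_in_HomQ[OF e]] quot_mult_hom_qclass[OF e, of 1] by simp
  then show "X \<in> dl_carrier a"
    using k quot_mult_hom_in_HomQ[OF e] unfolding dl_carrier_def by blast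
qed

lemma inj_on_dl_class: "inj_on (dl_class a) (Gamma a)"
proof
  fix e1 e2 assume "e1 \<in> Gamma a" "e2 \<in> Gamma a" and eq: "dl_class a e1 = dl_class a e2"
  obtain k \<phi> where 1: "(SOME p. p \<in> dl_class a e1) = (k, \<phi>)" "\<phi> (qclass a k 1) = e1"
    using some_in_dl_class[OF \<open>e1 \<in> Gamma a\<close>] by blast
  obtain l \<psi> where 2: "(SOME p. p \<in> dl_class a e2) = (l, \<psi>)" "\<psi> (qclass a l 1) = e2"
    using some_in_dl_class[OF \<open>e2 \<in> Gamma a\<close>] by blast
  have "(k, \<phi>) = (l, \<psi>)" using 1(1) 2(1) unfolding eq by simp
  then show "e1 = e2" using 1(2) 2(2) by simp
qed

lemma dl_add_dl_class:
  assumes "e1 \<in> Gamma a" "e2 \<in> Gamma a"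
  shows "dl_add a (dl_class a e1) (dl_class a e2) = dl_class a (e1 + e2)"
proof -
  obtain k \<phi> where 1: "(SOME p. p \<in> dl_class a e1) = (k, \<phi>)"
    "k \<ge> 1" "\<phi> \<in> HomQ a k" "\<phi> (qclass a k 1) = e1"
    using some_in_dl_class[OF assms(1)] by blast
  obtain l \<psi> where 2: "(SOME p. p \<in> dl_class a e2) = (l, \<psi>)"
    "l \<ge> 1" "\<psi> \<in> HomQ a l" "\<psi> (qclass a l 1) = e2"
    using some_in_dl_class[OF assms(2)] by blast
  define m where "m = max k l"
  have m: "k \<le> m" "l \<le> m" "m \<ge> 1" unfolding m_def using 1(2) by auto
  have t1: "trans_map a k m \<phi> = quot_mult_hom a m e1"
    using trans_map_HomQ[OF 1(3) m(1)] 1(4) by simp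
  have t2: "trans_map a l m \<psi> = quot_mult_hom a m e2"
    using trans_map_HomQ[OF 2(3) m(2)] 2(4) by simp
  have "e1 \<in> annih a m" "e2 \<in> annih a m"
    using HomQ_annih[OF 1(3)] HomQ_annih[OF 2(3)] annih_mono[OF m(1)] annih_mono[OF m(2)] 1(4) 2(4)
    by auto
  then have e: "e1 + e2 \<in> annih a m" unfolding annih_def by (simp add: distrib_left)
  have "dl_add a (dl_class a e1) (dl_class a e2) = dl_rel a `` {(m, quot_mult_hom a m (e1 + e2))}"
    by (simp add: dl_add_def 1(1) 2(1) Let_def t1 t2 hom_add_quot_mult_hom flip: m_def)
  also have "\<dots> = dl_class a (e1 + e2)"
    using dl_rel_Image[OF m(3) quot_mult_hom_in_HomQ[OF e]] quot_mult_hom_qclass[OF e, of 1] by simp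
  finally show ?thesis .
qed

lemma dl_smul_dl_class:
  assumes "e \<in> Gamma a"
  shows "dl_smul a r (dl_class a e) = dl_class a (r * e)"
proof -
  obtain k \<phi> where 1: "(SOME p. p \<in> dl_class a e) = (k, \<phi>)"
    "k \<ge> 1" "\<phi> \<in> HomQ a k" "\<phi> (qclass a k 1) = e"
    using some_in_dl_class[OF assms] by blast
  have re: "r * e \<in> annih a k" using HomQ_annih[OF 1(3)] 1(4) annih_mult by blast
  have "hom_smul r \<phi> = quot_mult_hom a k (r * e)"
    using HomQ_eq_quot_mult_hom[OF 1(3)] hom_smul_quot_mult_hom[of r a k e] 1(4) by simp
  then have "dl_smul a r (dl_class a e) = dl_rel a `` {(k, quot_mult_hom a k (r * e))}"
    by (simp add: dl_smul_def 1(1) Let_def)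
  also have "\<dots> = dl_class a (r * e)"
    using dl_rel_Image[OF 1(2) quot_mult_hom_in_HomQ[OF re]] quot_mult_hom_qclass[OF re, of 1] by simp
  finally show ?thesis .
qed

lemma Gamma_iso_direct_limit: "mod_iso (Gamma a) (+) (*) (dl_carrier a) (dl_add a) (dl_smul a)"
  unfolding mod_iso_def bij_betw_def
  using inj_on_dl_class dl_carrier_eq dl_add_dl_class dl_smul_dl_class by metis

lemma mod_iso_trans:
  assumes "mod_iso L addL smulL M addM smulM" "mod_iso M addM smulM N addN smulN"
  shows "mod_iso L addL smulL N addN smulN"
proof -
  obtain g where g: "bij_betw g L M" "\<forall>x\<in>L. \<forall>y\<in>L. g (addL x y) = addM (g x) (g y)"
    "\<forall>r. \<forall>x\<in>L. g (smulL r x) = smulM r (g x)" using assms(1) unfolding mod_iso_def by blast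
  obtain f where f: "bij_betw f M N" "\<forall>x\<in>M. \<forall>y\<in>M. f (addM x y) = addN (f x) (f y)"
    "\<forall>r. \<forall>x\<in>M. f (smulM r x) = smulN r (f x)" using assms(2) unfolding mod_iso_def by blast
  have "g x \<in> M" if "x \<in> L" for x using g(1) that bij_betwE by blast
  then show ?thesis unfolding mod_iso_def
    using bij_betw_trans[OF g(1) f(1)] f(2,3) g(2,3) by (intro exI[of _ "f \<circ> g"]) simp
qed

lemma mod_iso_sym:
  assumes "mod_iso M addM smulM N addN smulN"
    and "\<forall>x\<in>M. \<forall>y\<in>M. addM x y \<in> M" "\<forall>r. \<forall>x\<in>M. smulM r x \<in> M"
  shows "mod_iso N addN smulN M addM smulM"
proof -
  obtain f where f: "bij_betw f M N" "\<forall>x\<in>M. \<forall>y\<in>M. f (addM x y) = addN (f x) (f y)"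
    "\<forall>r. \<forall>x\<in>M. f (smulM r x) = smulN r (f x)" using assms(1) unfolding mod_iso_def by blast
  define g where "g = inv_into M f"
  have g: "g x \<in> M" "f (g x) = x" if "x \<in> N" for x
    using f(1) that unfolding g_def bij_betw_def by (auto intro: inv_into_into f_inv_into_f)
  have g_f: "g (f x) = x" if "x \<in> M" for x
    using f(1) that unfolding g_def bij_betw_def by (simp add: inv_into_f_f)
  have "g (addN x y) = addM (g x) (g y)" if "x \<in> N" "y \<in> N" for x y
    using g_f[of "addM (g x) (g y)"] f(2) g that assms(2) by metis
  moreover have "g (smulN r x) = smulM r (g x)" if "x \<in> N" for r x
    using g_f[of "smulM r (g x)"] f(3) g that assms(3) by metis
  moreover have "bij_betw g N M" unfolding g_def using f(1) by (rule bij_betw_inv_into)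
  ultimately show ?thesis unfolding mod_iso_def by blast
qed

lemma direct_limit_iso_iff:
  "mod_iso (dl_carrier a) (dl_add a) (dl_smul a) N addN smulN
    \<longleftrightarrow> mod_iso (Gamma a) (+) (*) N addN smulN"
  using mod_iso_trans[OF Gamma_iso_direct_limit]
    mod_iso_trans[OF mod_iso_sym[OF Gamma_iso_direct_limit]] Gamma_add Gamma_mult
  by blast

section \<open>Reduced rings\<close>

lemma reduced_ring_iff_one_in_Gamma:
  "reduced_ring (R :: 'a::comm_ring_1 itself) \<longleftrightarrow> (\<forall>x::'a. 1 \<in> Gamma x \<longrightarrow> x = 0)"
proof
  assume "reduced_ring R"
  then show "\<forall>x::'a. 1 \<in> Gamma x \<longrightarrow> x = 0" unfolding reduced_ring_def Gamma_def by auto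
next
  assume one: "\<forall>x::'a. 1 \<in> Gamma x \<longrightarrow> x = 0"
  show "reduced_ring R" unfolding reduced_ring_def
  proof (intro allI impI)
    fix x :: 'a and n assume "x ^ n = 0"
    show "x = 0"
    proof (cases n)
      case 0
      then have "(1::'a) = 0" using \<open>x ^ n = 0\<close> by simp
      then show ?thesis by (metis mult_1_right mult_zero_right)
    next
      case (Suc m)
      then have "1 \<in> Gamma x" unfolding Gamma_def using \<open>x ^ n = 0\<close> by auto
      then show ?thesis using one by blast
    qed
  qed
qed

lemma reduced_ring_annih_power:
  assumes "reduced_ring (R :: 'a::comm_ring_1 itself)" "k \<ge> 1"
  shows "annih (a::'a) k = annih a 1"
proof
  show "annih a 1 \<subseteq> annih a k" using annih_mono[OF assms(2)] .
  show "annih a k \<subseteq> annih a 1"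
  proof
    fix r assume "r \<in> annih a k"
    have "(a * r) ^ k = (a ^ k * r) * r ^ (k - 1)"
      using assms(2) by (simp add: power_mult_distrib mult.assoc flip: power_Suc)
    also have "\<dots> = 0" using \<open>r \<in> annih a k\<close> unfolding annih_def by simp
    finally show "r \<in> annih a 1"
      using assms(1) unfolding reduced_ring_def annih_def by auto
  qed
qed

lemma reduced_ring_Gamma_eq_annih:
  "reduced_ring (R :: 'a::comm_ring_1 itself) \<Longrightarrow> Gamma (a::'a) = annih a 1"
  using reduced_ring_annih_power mem_Gamma_iff by blast

lemma reduced_ring_iff_mult_Gamma_eq_zero:
  "reduced_ring (R :: 'a::comm_ring_1 itself) \<longleftrightarrow> (\<forall>a::'a. {a * r | r. r \<in> Gamma a} = {0})"
proof
  assume "reduced_ring R"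
  then have "Gamma a = annih a 1" for a :: 'a by (rule reduced_ring_Gamma_eq_annih)
  then show "\<forall>a::'a. {a * r | r. r \<in> Gamma a} = {0}"
    unfolding annih_def by (auto intro!: exI[of _ 0])
next
  assume zero: "\<forall>a::'a. {a * r | r. r \<in> Gamma a} = {0}"
  have "x = 0" if "1 \<in> Gamma x" for x :: 'a
  proof -
    have "x * 1 \<in> {x * r | r. r \<in> Gamma x}" using that by blast
    then show ?thesis using zero by simp
  qed
  then show "reduced_ring R" using reduced_ring_iff_one_in_Gamma by blast
qed

lemma reduced_ring_iff_annih_power_eq:
  "reduced_ring (R :: 'a::comm_ring_1 itself)
    \<longleftrightarrow> (\<forall>a::'a. \<forall>k. k \<ge> 1 \<longrightarrow> annih a 1 = annih a k)"
proof
  assume red: "reduced_ring R"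
  show "\<forall>a::'a. \<forall>k. k \<ge> 1 \<longrightarrow> annih a 1 = annih a k"
  proof (intro allI impI)
    fix a :: 'a and k :: nat assume "k \<ge> 1"
    show "annih a 1 = annih a k" by (rule sym, rule reduced_ring_annih_power[OF red \<open>k \<ge> 1\<close>])
  qed
next
  assume eq: "\<forall>a::'a. \<forall>k. k \<ge> 1 \<longrightarrow> annih a 1 = annih a k"
  have "x = 0" if nil: "1 \<in> Gamma x" for x :: 'a
  proof -
    obtain k where "k \<ge> 1" "1 \<in> annih x k" using nil unfolding mem_Gamma_iff by blast
    then have "1 \<in> annih x 1" using eq[rule_format, OF \<open>k \<ge> 1\<close>] by simp
    then show ?thesis unfolding annih_def by simp
  qed
  then show "reduced_ring R" using reduced_ring_iff_one_in_Gamma by blast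
qed

text \<open>A linear map on \<open>Gamma x \<ni> 1\<close> sends \<open>x = x * 1\<close> to \<open>x\<close> times an element of
  \<open>HomQ x 1\<close>, which \<open>x\<close> kills; so it sends \<open>x\<close> and \<open>0\<close> to the same map.\<close>

lemma Gamma_iso_HomQ_imp_zero:
  assumes "mod_iso (Gamma x) (+) (*) (HomQ x 1) hom_add hom_smul" "1 \<in> Gamma x"
  shows "x = 0"
proof -
  obtain f where f: "bij_betw f (Gamma x) (HomQ x 1)"
    "\<forall>r. \<forall>y\<in>Gamma x. f (r * y) = hom_smul r (f y)"
    using assms(1) unfolding mod_iso_def by blast
  have "f 1 \<in> HomQ x 1" using f(1) assms(2) bij_betwE by blast
  have "f (x * 1) = hom_smul (x ^ 1) (f 1)" using f(2) assms(2) by (simp only: power_one_right)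
  then have fx: "f x = (\<lambda>_. 0)" using hom_smul_power_HomQ[OF \<open>f 1 \<in> HomQ x 1\<close>] by simp
  have "f (0 * 1) = hom_smul 0 (f 1)" using f(2) assms(2) by blast
  then have f0: "f 0 = (\<lambda>_. 0)" by (simp add: hom_smul_def)
  have "x \<in> Gamma x" "0 \<in> Gamma x"
    using Gamma_mult[OF assms(2), of x] Gamma_mult[OF assms(2), of 0] by simp_all
  then show ?thesis using inj_onD[OF bij_betw_imp_inj_on[OF f(1)]] fx f0 by simp
qed

lemma reduced_ring_iff_Gamma_iso_HomQ:
  "reduced_ring (R :: 'a::comm_ring_1 itself)
    \<longleftrightarrow> (\<forall>a::'a. mod_iso (Gamma a) (+) (*) (HomQ a 1) hom_add hom_smul)"
proof
  assume "reduced_ring R"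
  then show "\<forall>a::'a. mod_iso (Gamma a) (+) (*) (HomQ a 1) hom_add hom_smul"
    by (simp add: reduced_ring_Gamma_eq_annih annih_iso_HomQ)
next
  assume "\<forall>a::'a. mod_iso (Gamma a) (+) (*) (HomQ a 1) hom_add hom_smul"
  then show "reduced_ring R"
    unfolding reduced_ring_iff_one_in_Gamma using Gamma_iso_HomQ_imp_zero by blast
qed

lemma ses_Gamma_iff: "ses_Gamma a \<longleftrightarrow> Gamma a = annih a 1"
  unfolding ses_Gamma_def annih_def by auto

lemma reduced_ring_iff_ses_Gamma:
  "reduced_ring (R :: 'a::comm_ring_1 itself) \<longleftrightarrow> (\<forall>a::'a. ses_Gamma a)"
proof
  assume "reduced_ring R"
  then show "\<forall>a::'a. ses_Gamma a" by (simp add: ses_Gamma_iff reduced_ring_Gamma_eq_annih)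
next
  assume "\<forall>a::'a. ses_Gamma a"
  then have "x = 0" if "1 \<in> Gamma x" for x :: 'a
    using that by (simp add: ses_Gamma_iff annih_def)
  then show "reduced_ring R" unfolding reduced_ring_iff_one_in_Gamma by blast
qed

theorem mainTheorem3:
  fixes R :: "'a::comm_ring_1 itself"
  defines "P1 \<equiv> reduced_ring R"
      and "P2 \<equiv> (\<forall>a::'a. {a * r | r. r \<in> Gamma a} = {0})"
      and "P3 \<equiv> (\<forall>a::'a. \<forall>k::nat. k \<ge> 1 \<longrightarrow> annih a 1 = annih a k)"
      and "P4 \<equiv> (\<forall>a::'a. mod_iso (dl_carrier a) (dl_add a) (dl_smul a)
                                   (HomQ a 1) hom_add hom_smul)"
      and "P5 \<equiv> (\<forall>a::'a. mod_iso (Gamma a) (+) (*) (HomQ a 1) hom_add hom_smul)"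
      and "P6 \<equiv> (\<forall>a::'a. ses_Gamma a)"
  shows "(P1 \<longleftrightarrow> P2) \<and> (P1 \<longleftrightarrow> P3) \<and> (P1 \<longleftrightarrow> P4) \<and> (P1 \<longleftrightarrow> P5) \<and> (P1 \<longleftrightarrow> P6)"
proof -
  have "P1 \<longleftrightarrow> P2" unfolding P1_def P2_def by (rule reduced_ring_iff_mult_Gamma_eq_zero)
  moreover have "P1 \<longleftrightarrow> P3" unfolding P1_def P3_def by (rule reduced_ring_iff_annih_power_eq)
  moreover have "P1 \<longleftrightarrow> P5" unfolding P1_def P5_def by (rule reduced_ring_iff_Gamma_iso_HomQ)
  moreover have "P4 \<longleftrightarrow> P5" unfolding P4_def P5_def by (simp only: direct_limit_iso_iff)
  moreover have "P1 \<longleftrightarrow> P6" unfolding P1_def P6_def by (rule reduced_ring_iff_ses_Gamma)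
  ultimately show ?thesis by blast
qed

end
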